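(* Let $A$ be a set and $w\in A^*$ a word. Let $A_w$ be the set consisting of the empty word together with all words in $A^*$ that start with $w$ (i.e. have $w$ as a prefix). Then $A_w$ is a free submonoid of $A^*$ if and only if $w$ is non-overlapping.
   Context: $A^*$ is the free monoid of finite words over $A$ under concatenation; $l(x)$ denotes the length of a word $x$. A word $u$ overlaps with a word $v$ if there exist words $x,y$ with $ux=yv$ and $l(y)<l(u)$. A word $w$ is non-overlapping if it does not overlap with itself. A submonoid of $A^*$ is free if every element has a unique factorization into irreducibles (nonempty elements of the submonoid not expressible as a product of two nonempty elements of the submonoid). *)

theory Defs
  imports Main "HOL-Library.Sublist"
begin

definition overlaps :: "'a set \<Rightarrow> 'a list \<Rightarrow> 'a list \<Rightarrow> bool" where
  "overlaps A u v \<longleftrightarrow>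
     (\<exists>x \<in> lists A. \<exists>y \<in> lists A. u @ x = y @ v \<and> 0 < length y \<and> length y < length u)"

definition non_overlapping :: "'a set \<Rightarrow> 'a list \<Rightarrow> bool" where
  "non_overlapping A w \<longleftrightarrow> \<not> overlaps A w w"

definition submonoid :: "'a set \<Rightarrow> 'a list set \<Rightarrow> bool" where
  "submonoid A M \<longleftrightarrow> M \<subseteq> lists A \<and> [] \<in> M \<and> (\<forall>x\<in>M. \<forall>y\<in>M. x @ y \<in> M)"

definition irreducibles :: "'a list set \<Rightarrow> 'a list set" where
  "irreducibles M = {z \<in> M. z \<noteq> [] \<and>
      \<not> (\<exists>x\<in>M. \<exists>y\<in>M. x \<noteq> [] \<and> y \<noteq> [] \<and> z = x @ y)}"

definition free_submonoid :: "'a set \<Rightarrow> 'a list set \<Rightarrow> bool" where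
  "free_submonoid A M \<longleftrightarrow> submonoid A M \<and>
     (\<forall>z\<in>M. \<exists>!fs. set fs \<subseteq> irreducibles M \<and> concat fs = z)"

definition prefix_monoid :: "'a set \<Rightarrow> 'a list \<Rightarrow> 'a list set" where
  "prefix_monoid A w = {[]} \<union> {z \<in> lists A. prefix w z}"

end

theory Submission
  imports Defs
begin

text \<open>
  If \<open>w\<close> is non-overlapping, then \<open>A\<^sub>w\<close> is left unitary: whenever \<open>u v\<close> and \<open>v\<close> lie in \<open>A\<^sub>w\<close>,
  so does \<open>u\<close>, since otherwise the occurrence of \<open>w\<close> at the start of \<open>u v\<close> would overlap the one
  at the start of \<open>v\<close>. A left unitary submonoid is free: in \<open>f F = g G\<close> with \<open>f, g\<close> irreducible
  the longer of \<open>f, g\<close> would split off a factor in the monoid. Conversely, an overlap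
  \<open>w x = y w\<close> with \<open>0 < |y| < |w|\<close> yields the two distinct factorizations
  \<open>(w y) w = w (w x)\<close> into irreducibles, which are irreducible being shorter than \<open>2|w|\<close>.
\<close>

definition left_unitary :: "'a list set \<Rightarrow> bool" where
  "left_unitary M \<longleftrightarrow> (\<forall>u v. u @ v \<in> M \<longrightarrow> v \<in> M \<longrightarrow> u \<in> M)"

lemma irreducibles_subset: "irreducibles M \<subseteq> M"
  unfolding irreducibles_def by auto

lemma irreducible_not_append:
  "z \<in> irreducibles M \<Longrightarrow> x \<in> M \<Longrightarrow> y \<in> M \<Longrightarrow> z = x @ y \<Longrightarrow> x = [] \<or> y = []"
  unfolding irreducibles_def by blast

lemma submonoid_concat: "submonoid A M \<Longrightarrow> set fs \<subseteq> M \<Longrightarrow> concat fs \<in> M"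
  unfolding submonoid_def by (induction fs) auto

lemma irreducible_factorization_exists:
  "z \<in> M \<Longrightarrow> \<exists>fs. set fs \<subseteq> irreducibles M \<and> concat fs = z"
proof (induction "length z" arbitrary: z rule: less_induct)
  case less
  show ?case
  proof (cases "z = [] \<or> z \<in> irreducibles M")
    case True
    then show ?thesis
      by (elim disjE) (auto intro: exI[of _ "[]"] exI[of _ "[z]"])
  next
    case False
    then obtain x y where "x \<in> M" "y \<in> M" "x \<noteq> []" "y \<noteq> []" and z: "z = x @ y"
      using less.prems unfolding irreducibles_def by auto
    with less.hyps obtain fx fy where
      "set fx \<subseteq> irreducibles M" "concat fx = x" "set fy \<subseteq> irreducibles M" "concat fy = y"
      by (metis length_append less_add_same_cancel1 less_add_same_cancel2 length_greater_0_conv)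
    then show ?thesis
      using z by (intro exI[of _ "fx @ fy"]) auto
  qed
qed

lemma left_unitary_irreducible_head_eq:
  assumes "left_unitary M"
    and f: "f \<in> irreducibles M" and g: "g \<in> irreducibles M"
    and "F \<in> M" "G \<in> M" "f @ F = g @ G"
  shows "f = g"
proof -
  have ne: "f \<noteq> []" "g \<noteq> []" and "f \<in> M" "g \<in> M"
    using f g unfolding irreducibles_def by auto
  obtain us where "(f = g @ us \<and> us @ F = G) \<or> (f @ us = g \<and> F = us @ G)"
    using \<open>f @ F = g @ G\<close> by (auto simp: append_eq_append_conv2)
  then show ?thesis
  proof (elim disjE conjE)
    assume "f = g @ us" "us @ F = G"
    then have "us \<in> M" using assms(1) \<open>F \<in> M\<close> \<open>G \<in> M\<close> unfolding left_unitary_def by blast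
    then show ?thesis using irreducible_not_append[OF f \<open>g \<in> M\<close>] ne \<open>f = g @ us\<close> by auto
  next
    assume "f @ us = g" "F = us @ G"
    then have "us \<in> M" using assms(1) \<open>F \<in> M\<close> \<open>G \<in> M\<close> unfolding left_unitary_def by blast
    then show ?thesis using irreducible_not_append[OF g \<open>f \<in> M\<close>] ne \<open>f @ us = g\<close> by auto
  qed
qed

lemma left_unitary_factorization_unique:
  assumes "submonoid A M" "left_unitary M"
  shows "set fs \<subseteq> irreducibles M \<Longrightarrow> set gs \<subseteq> irreducibles M \<Longrightarrow> concat fs = concat gs
    \<Longrightarrow> fs = gs"
proof (induction fs arbitrary: gs)
  case Nil
  then show ?case unfolding irreducibles_def by (cases gs) auto
next
  case (Cons f fs)
  then have "f \<noteq> []" unfolding irreducibles_def by auto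
  with Cons.prems obtain g gs' where gs: "gs = g # gs'" by (cases gs) auto
  have "concat fs \<in> M" "concat gs' \<in> M"
    using Cons.prems gs irreducibles_subset by (auto intro!: submonoid_concat[OF assms(1)])
  then have "f = g"
    using left_unitary_irreducible_head_eq[OF assms(2)] Cons.prems gs by auto
  then show ?case using Cons gs by auto
qed

lemma free_submonoid_if_left_unitary:
  "submonoid A M \<Longrightarrow> left_unitary M \<Longrightarrow> free_submonoid A M"
  unfolding free_submonoid_def
  by (metis irreducible_factorization_exists left_unitary_factorization_unique)

lemma prefix_monoid_iff: "z \<in> prefix_monoid A w \<longleftrightarrow> z = [] \<or> (z \<in> lists A \<and> prefix w z)"
  unfolding prefix_monoid_def by auto

lemma submonoid_prefix_monoid: "w \<in> lists A \<Longrightarrow> submonoid A (prefix_monoid A w)"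
  unfolding submonoid_def by (auto simp: prefix_monoid_iff)

lemma left_unitary_prefix_monoid:
  assumes "non_overlapping A w"
  shows "left_unitary (prefix_monoid A w)"
  unfolding left_unitary_def
proof (intro allI impI)
  fix u v
  assume uv: "u @ v \<in> prefix_monoid A w" and v: "v \<in> prefix_monoid A w"
  show "u \<in> prefix_monoid A w"
  proof (cases "u = [] \<or> v = [] \<or> length w \<le> length u")
    case True
    then consider "u = []" | "v = []" | "u \<noteq> []" "length w \<le> length u" by blast
    then show ?thesis
    proof cases
      case 3
      then have "prefix w (u @ v)" "u \<in> lists A" using uv by (auto simp: prefix_monoid_iff)
      then show ?thesis using 3 by (auto simp: prefix_monoid_iff intro: prefix_length_prefix)
    qed (use uv in \<open>auto simp: prefix_monoid_iff\<close>)
  next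
    case False
    then have "u \<noteq> []" "length u < length w" and uA: "u \<in> lists A" using uv
      by (auto simp: prefix_monoid_iff)
    obtain v' where "v = w @ v'" using v False by (auto simp: prefix_monoid_iff prefix_def)
    obtain t where t: "u @ w @ v' = w @ t"
      using uv \<open>v = w @ v'\<close> False by (auto simp: prefix_monoid_iff prefix_def)
    have "t \<in> lists A" using uv \<open>v = w @ v'\<close> arg_cong[OF t, of set] by (auto simp: prefix_monoid_iff)
    have "w @ take (length u) t = u @ w"
      using arg_cong[OF t(1), of "take (length u + length w)"] by simp
    then have "overlaps A w w"
      unfolding overlaps_def using uA \<open>t \<in> lists A\<close> \<open>u \<noteq> []\<close> \<open>length u < length w\<close>
      by (intro bexI[of _ "take (length u) t"] bexI[of _ u]) (auto dest: in_set_takeD)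
    with assms show ?thesis unfolding non_overlapping_def by simp
  qed
qed

lemma short_irreducible_prefix_monoid:
  assumes "z \<in> lists A" "prefix w z" "w \<noteq> []" "length z < 2 * length w"
  shows "z \<in> irreducibles (prefix_monoid A w)"
proof -
  have long: "length w \<le> length x" if "x \<in> prefix_monoid A w" "x \<noteq> []" for x
    using that by (auto simp: prefix_monoid_iff dest: prefix_length_le)
  have "\<not> (x \<noteq> [] \<and> y \<noteq> [] \<and> z = x @ y)"
    if "x \<in> prefix_monoid A w" "y \<in> prefix_monoid A w" for x y
    using long[OF that(1)] long[OF that(2)] assms(4) by auto
  moreover have "z \<in> prefix_monoid A w" "z \<noteq> []"
    using assms by (auto simp: prefix_monoid_iff)
  ultimately show ?thesis unfolding irreducibles_def by blast
qed

lemma non_overlapping_if_free_prefix_monoid: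
  assumes w: "w \<in> lists A" and free: "free_submonoid A (prefix_monoid A w)"
  shows "non_overlapping A w"
proof (rule ccontr)
  let ?I = "irreducibles (prefix_monoid A w)"
  assume "\<not> non_overlapping A w"
  then obtain x y where xy: "x \<in> lists A" "y \<in> lists A" "w @ x = y @ w"
      "0 < length y" "length y < length w"
    unfolding non_overlapping_def overlaps_def by auto
  have "length x = length y" using arg_cong[OF xy(3), of length] by simp
  then have irr: "w \<in> ?I" "w @ y \<in> ?I" "w @ x \<in> ?I"
    using xy(1,2,4,5) w by (auto intro!: short_irreducible_prefix_monoid)
  have "w @ y @ w \<in> prefix_monoid A w" using xy w by (auto simp: prefix_monoid_iff)
  then have "\<exists>!fs. set fs \<subseteq> ?I \<and> concat fs = w @ y @ w"
    using free unfolding free_submonoid_def by blast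
  moreover have "set [w @ y, w] \<subseteq> ?I \<and> concat [w @ y, w] = w @ y @ w"
    using irr by simp
  moreover have "set [w, w @ x] \<subseteq> ?I \<and> concat [w, w @ x] = w @ y @ w"
    using irr xy(3) by simp
  ultimately have "[w @ y, w] = [w, w @ x]" by blast
  then show False using xy(4) by simp
qed

theorem lemma4:
  fixes A :: "'a set" and w :: "'a list"
  assumes "w \<in> lists A"
  shows "free_submonoid A (prefix_monoid A w) \<longleftrightarrow> non_overlapping A w"
proof
  show "non_overlapping A w" if "free_submonoid A (prefix_monoid A w)"
    using non_overlapping_if_free_prefix_monoid[OF assms that] .
  show "free_submonoid A (prefix_monoid A w)" if "non_overlapping A w"
    using free_submonoid_if_left_unitary[OF submonoid_prefix_monoid[OF assms]
        left_unitary_prefix_monoid[OF that]] .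
qed

end
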